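(* Let $M$ be a finite ordinal monoid and $h\colon\Sigma\to M$. Then $(\mathcal P(M),\{1\},\subseteq,\cdot,-^\omega,-^\sharp)$ and $(\mathrm{Sat}(h),\{1\},\subseteq,\cdot,-^\omega,-^\sharp)$ (with the operations of the power ordinal monoid) are ordinal monoids with merge.
   Context: An ordinal monoid is a set $M$ with $\pi\colon M^{\mathrm{ord}}\to M$ (words of countable ordinal length), $\pi(x)=x$ on one-letter words, and generalised associativity $\pi((\pi(u_\iota))_{\iota<\alpha})=\pi(u_0u_1\cdots)$. Write $1=\pi(\varepsilon)$, $x\cdot y=\pi(xy)$, $x^\omega=\pi(xxx\cdots)$; a finite ordinal monoid is determined by $(M,1,\cdot,-^\omega)$. It is ordered by a partial order $\le$ if $u\le v$ letterwise implies $\pi(u)\le\pi(v)$. Power ordinal monoid: $\mathcal P(M)$ with $\Pi((X_\iota)_\iota)=\{\pi((x_\iota)_\iota):x_\iota\in X_\iota\}$; unit $\{1\}$, $X\cdot Y=\{xy\}$, $X^\omega=\{u\cdot v^\omega:u,v\in X^+\}$ ($X^+$ = finite nonempty products of elements of $X$). In a finite semigroup $x^{!}$ is the idempotent power of $x$ and $x^{!+k}$ the eventual value of $x^{n!+k}$; $X^\sharp=\bigcup_{k\in\mathbb N}X^{!+k}$ (powers in $(\mathcal P(M),\cdot)$). $\mathrm{Sat}(h)$ is the least subset of $\mathcal P(M)$ containing all $\{h(a)\}$ ($a\in\Sigma$) and $\{1\}$ closed under binary product, $\sharp$ and $\omega$. Ordinal monoid with merge: a tuple $(M,1,\le,\cdot,-^\omega,-^\sharp)$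 with $M$ finite, $(M,1,\le,\cdot,-^\omega)$ the presentation of an ordered finite ordinal monoid, and $-^\sharp\colon M\to M$ monotone such that for all $a,b\in M$ and all integers $k$: $a^{!+k}\le a^\sharp$, $(a^{!})^\sharp=a^{!}$, $a^\sharp\cdot a^\sharp=(a^\sharp)^\sharp=a^\sharp$, and $(a\cdot b)^\sharp=a\cdot(b\cdot a)^\sharp\cdot b$. *)

theory Defs
  imports Main
begin

text \<open>A word of countable ordinal length over C is represented by a well-order r
whose field is a subset of nat (so every countable ordinal occurs, up to isomorphism)
together with a letter assignment f; only the values of f on Field r matter.\<close>

definition om_word :: "'a set \<Rightarrow> nat rel \<Rightarrow> (nat \<Rightarrow> 'a) \<Rightarrow> bool" where
  "om_word C r f \<longleftrightarrow> Well_order r \<and> f ` Field r \<subseteq> C"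

text \<open>Generalised associativity: a monotone map g from the positions of the word (r,f)
to the positions of a well-order s cuts (r,f) into consecutive (possibly empty) factors
u_j (the fibres of g), j ranging over s; then pi of the word of the pi(u_j) is pi(r,f).\<close>

definition ordinal_monoid :: "'a set \<Rightarrow> (nat rel \<Rightarrow> (nat \<Rightarrow> 'a) \<Rightarrow> 'a) \<Rightarrow> bool" where
  "ordinal_monoid C pi \<longleftrightarrow>
     (\<forall>r f. om_word C r f \<longrightarrow> pi r f \<in> C) \<and>
     (\<forall>r f f'. om_word C r f \<longrightarrow> (\<forall>i\<in>Field r. f i = f' i) \<longrightarrow> pi r f = pi r f') \<and>
     (\<forall>i f. f i \<in> C \<longrightarrow> pi {(i,i)} f = f i) \<and>
     (\<forall>r s f g. om_word C r f \<longrightarrow> Well_order s \<longrightarrow> g ` Field r \<subseteq> Field s \<longrightarrow>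
        (\<forall>i j. (i,j) \<in> r \<longrightarrow> (g i, g j) \<in> s) \<longrightarrow>
        pi s (\<lambda>j. pi (Restr r {i \<in> Field r. g i = j}) f) = pi r f)"

definition ordered_om :: "'a set \<Rightarrow> ('a \<Rightarrow> 'a \<Rightarrow> bool) \<Rightarrow> (nat rel \<Rightarrow> (nat \<Rightarrow> 'a) \<Rightarrow> 'a) \<Rightarrow> bool" where
  "ordered_om C le pi \<longleftrightarrow>
     (\<forall>x\<in>C. le x x) \<and>
     (\<forall>x\<in>C. \<forall>y\<in>C. le x y \<longrightarrow> le y x \<longrightarrow> x = y) \<and>
     (\<forall>x\<in>C. \<forall>y\<in>C. \<forall>z\<in>C. le x y \<longrightarrow> le y z \<longrightarrow> le x z) \<and>
     (\<forall>r f f'. om_word C r f \<longrightarrow> om_word C r f' \<longrightarrow> (\<forall>i\<in>Field r. le (f i) (f' i)) \<longrightarrow>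
        le (pi r f) (pi r f'))"

definition w2 :: "nat rel" where "w2 = {(0,0),(0,1),(1,1)}"
definition womega :: "nat rel" where "womega = {(i,j). i \<le> j}"

definition om_one :: "(nat rel \<Rightarrow> (nat \<Rightarrow> 'a) \<Rightarrow> 'a) \<Rightarrow> 'a" where
  "om_one pi = pi {} (\<lambda>_. undefined)"
definition om_mult :: "(nat rel \<Rightarrow> (nat \<Rightarrow> 'a) \<Rightarrow> 'a) \<Rightarrow> 'a \<Rightarrow> 'a \<Rightarrow> 'a" where
  "om_mult pi x y = pi w2 (\<lambda>i. if i = 0 then x else y)"
definition om_omega :: "(nat rel \<Rightarrow> (nat \<Rightarrow> 'a) \<Rightarrow> 'a) \<Rightarrow> 'a \<Rightarrow> 'a" where
  "om_omega pi x = pi womega (\<lambda>_. x)"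

definition ordered_fin_om_presentation ::
  "'a set \<Rightarrow> 'a \<Rightarrow> ('a \<Rightarrow> 'a \<Rightarrow> bool) \<Rightarrow> ('a \<Rightarrow> 'a \<Rightarrow> 'a) \<Rightarrow> ('a \<Rightarrow> 'a) \<Rightarrow> bool" where
  "ordered_fin_om_presentation C e le m om \<longleftrightarrow> finite C \<and>
     (\<exists>pi. ordinal_monoid C pi \<and> ordered_om C le pi \<and>
        (\<forall>f. pi {} f = e) \<and>
        (\<forall>x\<in>C. \<forall>y\<in>C. m x y = om_mult pi x y) \<and>
        (\<forall>x\<in>C. om x = om_omega pi x))"

primrec spow :: "('a \<Rightarrow> 'a \<Rightarrow> 'a) \<Rightarrow> 'a \<Rightarrow> 'a \<Rightarrow> nat \<Rightarrow> 'a" where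
  "spow m e a 0 = e"
| "spow m e a (Suc n) = m (spow m e a n) a"

definition bangp :: "('a \<Rightarrow> 'a \<Rightarrow> 'a) \<Rightarrow> 'a \<Rightarrow> 'a \<Rightarrow> int \<Rightarrow> 'a" where
  "bangp m e a k = (THE y. \<exists>N. \<forall>n\<ge>N. spow m e a (nat (int (fact n) + k)) = y)"

definition ordinal_monoid_merge ::
  "'a set \<Rightarrow> 'a \<Rightarrow> ('a \<Rightarrow> 'a \<Rightarrow> bool) \<Rightarrow> ('a \<Rightarrow> 'a \<Rightarrow> 'a) \<Rightarrow> ('a \<Rightarrow> 'a) \<Rightarrow> ('a \<Rightarrow> 'a) \<Rightarrow> bool" where
  "ordinal_monoid_merge C e le m om sh \<longleftrightarrow>
     ordered_fin_om_presentation C e le m om \<and>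
     (\<forall>a\<in>C. sh a \<in> C) \<and>
     (\<forall>a\<in>C. \<forall>b\<in>C. le a b \<longrightarrow> le (sh a) (sh b)) \<and>
     (\<forall>a\<in>C. (\<forall>k::int. le (bangp m e a k) (sh a)) \<and>
             sh (bangp m e a 0) = bangp m e a 0 \<and>
             m (sh a) (sh a) = sh a \<and> sh (sh a) = sh a) \<and>
     (\<forall>a\<in>C. \<forall>b\<in>C. sh (m a b) = m a (m (sh (m b a)) b))"

definition pmul :: "(nat rel \<Rightarrow> (nat \<Rightarrow> 'a) \<Rightarrow> 'a) \<Rightarrow> 'a set \<Rightarrow> 'a set \<Rightarrow> 'a set" where
  "pmul pi X Y = {om_mult pi x y | x y. x \<in> X \<and> y \<in> Y}"

definition pplus :: "(nat rel \<Rightarrow> (nat \<Rightarrow> 'a) \<Rightarrow> 'a) \<Rightarrow> 'a set \<Rightarrow> 'a set" where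
  "pplus pi X = (\<Union>n\<in>{n. n \<ge> 1}. spow (pmul pi) {om_one pi} X n)"

definition pomega :: "(nat rel \<Rightarrow> (nat \<Rightarrow> 'a) \<Rightarrow> 'a) \<Rightarrow> 'a set \<Rightarrow> 'a set" where
  "pomega pi X = {om_mult pi u (om_omega pi v) | u v. u \<in> pplus pi X \<and> v \<in> pplus pi X}"

definition psharp :: "(nat rel \<Rightarrow> (nat \<Rightarrow> 'a) \<Rightarrow> 'a) \<Rightarrow> 'a set \<Rightarrow> 'a set" where
  "psharp pi X = (\<Union>k::nat. bangp (pmul pi) {om_one pi} X (int k))"

inductive_set Sat :: "(nat rel \<Rightarrow> (nat \<Rightarrow> 'a) \<Rightarrow> 'a) \<Rightarrow> ('b \<Rightarrow> 'a) \<Rightarrow> 'a set set"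
  for pi h where
  letter: "{h a} \<in> Sat pi h"
| unit: "{om_one pi} \<in> Sat pi h"
| mul: "X \<in> Sat pi h \<Longrightarrow> Y \<in> Sat pi h \<Longrightarrow> pmul pi X Y \<in> Sat pi h"
| sharp: "X \<in> Sat pi h \<Longrightarrow> psharp pi X \<in> Sat pi h"
| omega: "X \<in> Sat pi h \<Longrightarrow> pomega pi X \<in> Sat pi h"

end

theory Submission
  imports Defs "HOL-Library.Ramsey"
begin

text \<open>The power-set operations are those of the ordinal monoid on Pow M in which the product of a
  word of sets is the set of all products of letterwise choices. Its omega-power is
  X^omega = {u v^omega | u, v in X^+} by Ramsey's theorem: an omega-word over a finite ordinal
  monoid can be cut into blocks u, v, v, ... of equal value v. Sat(h) is closed under products of
  all countable words, because a subset containing 1 and closed under binary products and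
  omega-powers is closed under pi: by induction on the order type, a word with a last letter
  splits off that letter, and a word without one is an omega-sequence of shorter blocks, to which
  Ramsey applies. Finally, the powers of a set X are eventually periodic, so that X^sharp is the
  union of the tail of powers X^j, j >= N; all merge axioms follow from this description.\<close>

lemma womega_eq_natLeq: "womega = natLeq"
  by (simp add: womega_def natLeq_def)

lemma Well_order_womega: "Well_order womega"
  by (simp add: womega_eq_natLeq natLeq_Well_order)

lemma Field_womega [simp]: "Field womega = UNIV"
  by (simp add: womega_eq_natLeq Field_natLeq)

lemma Field_Restr_womega [simp]: "Field (Restr womega A) = A"
  by (auto simp: Field_def womega_def)

lemma Well_order_Restr_womega: "Well_order (Restr womega A)"
  by (rule Well_order_Restr[OF Well_order_womega])

lemma w2_eq_Restr_womega: "w2 = Restr womega {0,1}"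
  by (auto simp: w2_def womega_def)

lemma Well_order_w2: "Well_order w2"
  unfolding w2_eq_Restr_womega by (rule Well_order_Restr_womega)

lemma Field_w2 [simp]: "Field w2 = {0, 1}"
  by (auto simp: w2_def Field_def)

lemma Well_order_empty: "Well_order {}"
  by (simp add: well_order_on_def linear_order_on_def partial_order_on_def preorder_on_def
      refl_on_def trans_def antisym_def total_on_def)

lemma Well_order_singleton: "Well_order {(i::nat, i)}"
proof -
  have "{(i, i)} = Restr womega {i}" by (auto simp: womega_def)
  then show ?thesis by (metis Well_order_Restr_womega)
qed

lemma Ramsey_pairs_strict_mono:
  fixes c :: "nat \<Rightarrow> nat \<Rightarrow> 'b"
  assumes fin: "finite (range (case_prod c))"
  shows "\<exists>e :: nat \<Rightarrow> nat. \<exists>t. strict_mono e \<and> (\<forall>a b. a < b \<longrightarrow> c (e a) (e b) = t)"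
proof -
  obtain idx :: "'b \<Rightarrow> nat" and N where idx: "idx ` range (case_prod c) = {i. i < N}"
    and inj: "inj_on idx (range (case_prod c))"
    using finite_imp_inj_to_nat_seg[OF fin] by blast
  have c_range: "c i j \<in> range (case_prod c)" for i j
    using rangeI[of "case_prod c" "(i, j)"] by simp
  define col where "col X = idx (c (Min X) (Max X))" for X
  have col_pair: "col {x, y} = idx (c x y)" if "x < y" for x y
    using that unfolding col_def by simp
  have "col X < N" for X
  proof -
    have "col X \<in> idx ` range (case_prod c)"
      unfolding col_def using c_range by (rule imageI)
    then show ?thesis unfolding idx by simp
  qed
  then have "\<forall>x\<in>UNIV. \<forall>y\<in>UNIV. x \<noteq> y \<longrightarrow> col {x, y} < N"
    by simp
  from Ramsey2[OF infinite_UNIV_nat this] obtain Y k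
    where Y: "infinite Y" and k: "\<forall>x\<in>Y. \<forall>y\<in>Y. x \<noteq> y \<longrightarrow> col {x, y} = k"
    by blast
  define e where "e = enumerate Y"
  have e: "strict_mono e"
    unfolding e_def by (intro strict_monoI enumerate_mono[OF _ Y])
  have eY: "e a \<in> Y" for a
    unfolding e_def by (rule enumerate_in_set[OF Y])
  have idx_k: "idx (c (e a) (e b)) = k" if "a < b" for a b
  proof -
    have "e a < e b" using strict_monoD[OF e that] .
    with k eY show ?thesis by (simp add: col_pair[symmetric])
  qed
  have "c (e a) (e b) = c (e 0) (e 1)" if "a < b" for a b
    using idx_k[OF that] idx_k[of 0 1] inj_onD[OF inj _ c_range c_range] by simp
  with e show ?thesis by blast
qed

lemma strict_mono_block_index:
  fixes h :: "nat \<Rightarrow> nat"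
  assumes h: "strict_mono h" and h0: "h 0 = 0"
  obtains g where "\<And>i a. g i = a \<longleftrightarrow> h a \<le> i \<and> i < h (Suc a)" and "mono g"
proof -
  define g where "g i = Max {a. h a \<le> i}" for i
  have fin: "finite {a. h a \<le> i}" for i
    using strict_mono_imp_increasing[OF h] by (auto intro: finite_subset[of _ "{..i}"] le_trans)
  have g_below: "h (g i) \<le> i" for i
  proof -
    have "0 \<in> {a. h a \<le> i}" using h0 by simp
    then show ?thesis using Max_in[OF fin, of i] unfolding g_def by blast
  qed
  have g_max: "b \<le> g i" if "h b \<le> i" for b i
    unfolding g_def using fin that by (intro Max_ge) auto
  have "g i = a \<longleftrightarrow> h a \<le> i \<and> i < h (Suc a)" for i a
  proof
    assume "g i = a"
    then show "h a \<le> i \<and> i < h (Suc a)"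
      using g_below g_max[of "Suc a" i] by fastforce
  next
    assume a: "h a \<le> i \<and> i < h (Suc a)"
    then have "h (g i) < h (Suc a)" using g_below le_less_trans by blast
    then show "g i = a"
      using g_max[of a i] a strict_mono_less[OF h] by fastforce
  qed
  moreover have "mono g"
  proof (rule monoI)
    fix i j :: nat assume "i \<le> j"
    then show "g i \<le> g j" using g_below[of i] by (intro g_max) simp
  qed
  ultimately show ?thesis using that by blast
qed

lemma Restr_nomax_countable_blocks:
  fixes r :: "nat rel"
  assumes WO: "Well_order r" and A: "A \<subseteq> Field r" and ne: "A \<noteq> {}"
    and no_max: "\<not> (\<exists>m\<in>A. \<forall>i\<in>A. (i, m) \<in> r)"
  shows "\<exists>g :: nat \<Rightarrow> nat. (\<forall>i j. (i, j) \<in> Restr r A \<longrightarrow> g i \<le> g j)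
           \<and> (\<forall>k. \<exists>z\<in>A. {i \<in> A. g i = k} \<subseteq> underS r z)"
proof -
  have refl: "refl_on (Field r) r" and trans: "trans r" and antisym: "antisym r"
    and total: "total_on (Field r) r"
    using WO by (auto simp: order_on_defs)
  let ?lt = "\<lambda>a b. (a, b) \<in> r \<and> a \<noteq> b"
  have bigger: "\<exists>z\<in>A. ?lt k z" if k: "k \<in> A" for k
  proof -
    obtain i where i: "i \<in> A" "(i, k) \<notin> r" using no_max k by blast
    then have "i \<noteq> k" using refl k A by (auto simp: refl_on_def)
    then have "(k, i) \<in> r" using total i k A by (auto simp: total_on_def)
    then show ?thesis using i \<open>i \<noteq> k\<close> by blast
  qed
  define z where "z k = (SOME z. z \<in> A \<and> (k \<in> A \<longrightarrow> ?lt k z))" for k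
  have z: "z k \<in> A \<and> (k \<in> A \<longrightarrow> ?lt k (z k))" for k
    unfolding z_def by (rule someI_ex) (use bigger ne in \<open>cases "k \<in> A"; blast\<close>)
  txt \<open>Positions are natural numbers and k <_r z k for k \<in> A, so every i \<in> A lies below
    some z k; the block of i is the least such k.\<close>
  define g where "g i = (LEAST k. ?lt i (z k))" for i
  have g: "?lt i (z (g i))" if "i \<in> A" for i
    unfolding g_def by (rule LeastI[of _ i]) (use z that in blast)
  have "g i \<le> g j" if "(i, j) \<in> Restr r A" for i j
  proof -
    have "?lt j (z (g j))" using g that by blast
    then have "?lt i (z (g j))" using that trans antisym by (auto dest: transD antisymD)
    then show ?thesis unfolding g_def[of i] by (rule Least_le)
  qed
  moreover have "{i \<in> A. g i = k} \<subseteq> underS r (z k)" for k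
    using g by (auto simp: underS_def)
  ultimately show ?thesis using z by blast
qed

section \<open>Finite ordinal monoids\<close>

primrec seg_prod :: "(nat rel \<Rightarrow> (nat \<Rightarrow> 'a) \<Rightarrow> 'a) \<Rightarrow> (nat \<Rightarrow> 'a) \<Rightarrow> nat \<Rightarrow> nat \<Rightarrow> 'a" where
  "seg_prod pi f a 0 = om_one pi"
| "seg_prod pi f a (Suc n) = om_mult pi (seg_prod pi f a n) (f (a + n))"

lemma seg_prod_cong:
  "(\<And>i. i < n \<Longrightarrow> f (a + i) = f' (a' + i)) \<Longrightarrow> seg_prod pi f a n = seg_prod pi f' a' n"
  by (induction n) auto

lemma seg_prod_in_submonoid:
  assumes "\<And>x y. x \<in> S \<Longrightarrow> y \<in> S \<Longrightarrow> om_mult pi x y \<in> S" and "om_one pi \<in> S"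
    and "\<And>i. i < n \<Longrightarrow> f (a + i) \<in> S"
  shows "seg_prod pi f a n \<in> S"
  using assms by (induction n) auto

locale ordinal_monoid_on =
  fixes C :: "'a set" and pi :: "nat rel \<Rightarrow> (nat \<Rightarrow> 'a) \<Rightarrow> 'a"
  assumes ordinal_monoid: "ordinal_monoid C pi"
begin

lemma pi_closed:
  assumes "Well_order r" and "\<And>i. i \<in> Field r \<Longrightarrow> f i \<in> C"
  shows "pi r f \<in> C"
proof -
  from ordinal_monoid have "\<forall>r f. om_word C r f \<longrightarrow> pi r f \<in> C"
    unfolding ordinal_monoid_def by (rule conjunct1)
  moreover have "om_word C r f" using assms unfolding om_word_def by blast
  ultimately show ?thesis by blast
qed

lemma pi_cong:
  assumes "Well_order r" and "\<And>i. i \<in> Field r \<Longrightarrow> f i \<in> C"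
    and "\<And>i. i \<in> Field r \<Longrightarrow> f i = f' i"
  shows "pi r f = pi r f'"
proof -
  from ordinal_monoid have "\<forall>r f f'. om_word C r f \<longrightarrow> (\<forall>i\<in>Field r. f i = f' i) \<longrightarrow> pi r f = pi r f'"
    unfolding ordinal_monoid_def by (elim conjE)
  moreover have "om_word C r f" using assms(1,2) unfolding om_word_def by blast
  ultimately show ?thesis using assms(3) by blast
qed

lemma pi_singleton: "f i \<in> C \<Longrightarrow> pi {(i, i)} f = f i"
proof -
  from ordinal_monoid have "\<forall>i f. f i \<in> C \<longrightarrow> pi {(i,i)} f = f i"
    unfolding ordinal_monoid_def by (elim conjE)
  then show "f i \<in> C \<Longrightarrow> pi {(i, i)} f = f i" by blast
qed

lemma pi_assoc:
  assumes "Well_order r" and "\<And>i. i \<in> Field r \<Longrightarrow> f i \<in> C" and "Well_order s"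
    and "g ` Field r \<subseteq> Field s" and "\<And>i j. (i, j) \<in> r \<Longrightarrow> (g i, g j) \<in> s"
  shows "pi s (\<lambda>j. pi (Restr r {i \<in> Field r. g i = j}) f) = pi r f"
proof -
  from ordinal_monoid have "\<forall>r s f g. om_word C r f \<longrightarrow> Well_order s \<longrightarrow> g ` Field r \<subseteq> Field s \<longrightarrow>
        (\<forall>i j. (i,j) \<in> r \<longrightarrow> (g i, g j) \<in> s) \<longrightarrow>
        pi s (\<lambda>j. pi (Restr r {i \<in> Field r. g i = j}) f) = pi r f"
    unfolding ordinal_monoid_def by (elim conjE)
  moreover have "om_word C r f" using assms(1,2) unfolding om_word_def by blast
  ultimately show ?thesis using assms(3-5) by blast
qed

lemma pi_regroup:
  assumes r: "Well_order r" and f: "\<And>i. i \<in> Field r \<Longrightarrow> f i \<in> C" and s: "Well_order s"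
    and g: "\<And>i. i \<in> Field r \<Longrightarrow> g i \<in> Field s" and mono: "\<And>i j. (i, j) \<in> r \<Longrightarrow> (g i, g j) \<in> s"
    and G: "\<And>j. j \<in> Field s \<Longrightarrow> G j = pi (Restr r {i \<in> Field r. g i = j}) f"
  shows "pi s G = pi r f"
proof -
  have "pi s G = pi s (\<lambda>j. pi (Restr r {i \<in> Field r. g i = j}) f)"
  proof (rule pi_cong[OF s])
    fix j assume j: "j \<in> Field s"
    show "G j \<in> C" unfolding G[OF j]
    proof (rule pi_closed[OF Well_order_Restr[OF r]])
      fix i assume "i \<in> Field (Restr r {i \<in> Field r. g i = j})"
      then have "i \<in> {i \<in> Field r. g i = j}" by (rule subsetD[OF Field_Restr_subset])
      then show "f i \<in> C" using f by blast
    qed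
  qed (rule G)
  also have "\<dots> = pi r f"
    by (rule pi_assoc[OF r f s image_subsetI[OF g] mono])
  finally show ?thesis .
qed

lemma pi_empty: "pi {} f = om_one pi"
  unfolding om_one_def by (rule pi_cong) (auto simp: Well_order_empty)

lemma one_closed: "om_one pi \<in> C"
  unfolding om_one_def by (rule pi_closed) (auto simp: Well_order_empty)

lemma mult_closed: "x \<in> C \<Longrightarrow> y \<in> C \<Longrightarrow> om_mult pi x y \<in> C"
  unfolding om_mult_def by (rule pi_closed[OF Well_order_w2]) auto

lemma seg_prod_closed: "(\<And>i. f i \<in> C) \<Longrightarrow> seg_prod pi f a n \<in> C"
  by (rule seg_prod_in_submonoid) (auto simp: one_closed mult_closed)

lemma pi_split:
  assumes r: "Well_order r" and f: "\<And>i. i \<in> Field r \<Longrightarrow> f i \<in> C"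
    and P: "\<And>i j. (i, j) \<in> r \<Longrightarrow> j \<in> P \<Longrightarrow> i \<in> P"
  shows "pi r f = om_mult pi (pi (Restr r P) f) (pi (Restr r (- P)) f)"
proof -
  let ?g = "\<lambda>i. if i \<in> P then 0 else 1 :: nat"
  have "pi w2 (\<lambda>j. if j = 0 then pi (Restr r P) f else pi (Restr r (- P)) f) = pi r f"
  proof (rule pi_regroup[OF r f Well_order_w2, where g = ?g])
    show "(?g i, ?g j) \<in> w2" if "(i, j) \<in> r" for i j
      using P[OF that] by (auto simp: w2_def)
    fix j assume "j \<in> Field w2"
    then have "j = 0 \<or> j = 1" by auto
    then have "Restr r {i \<in> Field r. ?g i = j} = Restr r (if j = 0 then P else - P)"
      by (auto simp: Field_def)
    then show "(if j = 0 then pi (Restr r P) f else pi (Restr r (- P)) f)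
        = pi (Restr r {i \<in> Field r. ?g i = j}) f"
      by simp
  qed auto
  then show ?thesis by (simp add: om_mult_def)
qed

lemma pi_segment:
  assumes f: "\<And>i. f i \<in> C"
  shows "pi (Restr womega {a..<a + n}) f = seg_prod pi f a n"
proof (induction n)
  case 0
  then show ?case using pi_empty by simp
next
  case (Suc n)
  let ?r = "Restr womega {a..<a + Suc n}"
  have "pi ?r f = om_mult pi (pi (Restr ?r {..<a + n}) f) (pi (Restr ?r (- {..<a + n})) f)"
    using f by (intro pi_split Well_order_Restr_womega) (auto simp: womega_def)
  also have "Restr ?r {..<a + n} = Restr womega {a..<a + n}"
    by auto
  also have "Restr ?r (- {..<a + n}) = {(a + n, a + n)}"
    by (auto simp: womega_def)
  finally show ?case
    using Suc pi_singleton[of f "a + n", OF f] by simp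
qed

lemma mult_one_left:
  assumes x: "x \<in> C"
  shows "om_mult pi (om_one pi) x = x"
proof -
  have "Restr womega {0..<0 + 1} = {(0, 0)}"
    by (auto simp: womega_def)
  then show ?thesis
    using pi_segment[of "\<lambda>_. x" 0 1] pi_singleton[of "\<lambda>_. x" 0] x by simp
qed

lemma mult_one_right:
  assumes x: "x \<in> C"
  shows "om_mult pi x (om_one pi) = x"
proof -
  let ?r = "{(0::nat, 0::nat)}"
  have "pi w2 (\<lambda>j. if j = 0 then x else om_one pi) = pi ?r (\<lambda>_. x)"
  proof (rule pi_regroup[OF Well_order_singleton _ Well_order_w2, where g = "\<lambda>_. 0"])
    fix j assume "j \<in> Field w2"
    then show "(if j = 0 then x else om_one pi) = pi (Restr ?r {i \<in> Field ?r. 0 = j}) (\<lambda>_. x)"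
      using pi_singleton[of "\<lambda>_. x" 0] pi_empty x by (auto simp: Field_def)
  qed (auto simp: x w2_def)
  then show ?thesis
    using pi_singleton[of "\<lambda>_. x" 0] x by (simp add: om_mult_def)
qed

lemma mult_assoc:
  assumes x: "x \<in> C" and y: "y \<in> C" and z: "z \<in> C"
  shows "om_mult pi (om_mult pi x y) z = om_mult pi x (om_mult pi y z)"
proof -
  define f where "f = (\<lambda>i::nat. if i = 0 then x else if i = 1 then y else z)"
  have f_closed: "\<And>i. f i \<in> C" using x y z by (simp add: f_def)
  let ?r = "Restr womega {0..<0 + 3}"
  have "om_mult pi (om_mult pi x y) z = seg_prod pi f 0 3"
    by (simp add: f_def numeral_3_eq_3 mult_one_left x)
  also have "\<dots> = pi ?r f"
    by (rule pi_segment[OF f_closed, symmetric])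
  also have "\<dots> = om_mult pi (pi (Restr ?r {0}) f) (pi (Restr ?r (- {0})) f)"
    using f_closed by (intro pi_split Well_order_Restr_womega) (auto simp: womega_def)
  also have "Restr ?r {0} = {(0, 0)}"
    by (auto simp: womega_def)
  also have "Restr ?r (- {0}) = Restr womega {1..<1 + 2}"
    by auto
  also have "pi (Restr womega {1..<1 + 2}) f = seg_prod pi f 1 2"
    by (rule pi_segment[OF f_closed])
  finally show ?thesis
    using pi_singleton[of f 0] by (simp add: f_def numeral_2_eq_2 mult_one_left x y)
qed

lemma pi_omega_blocks:
  assumes f: "\<And>i. f i \<in> C" and h: "strict_mono h" "h 0 = 0"
  shows "pi womega f = pi womega (\<lambda>a. seg_prod pi f (h a) (h (Suc a) - h a))"
proof -
  obtain g where g: "\<And>i a. g i = a \<longleftrightarrow> h a \<le> i \<and> i < h (Suc a)" and "mono g"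
    using strict_mono_block_index[OF h] by blast
  show ?thesis
  proof (rule pi_regroup[OF Well_order_womega _ Well_order_womega, symmetric])
    show "(g i, g j) \<in> womega" if "(i, j) \<in> womega" for i j
      using that \<open>mono g\<close> by (auto simp: womega_def mono_def)
    fix a
    have "{i \<in> Field womega. g i = a} = {h a..<h a + (h (Suc a) - h a)}"
      using g strict_monoD[OF h(1), of a "Suc a"] by auto
    then show "seg_prod pi f (h a) (h (Suc a) - h a) = pi (Restr womega {i \<in> Field womega. g i = a}) f"
      using pi_segment[OF f] by simp
  qed (use f in auto)
qed

lemma pi_omega_head_tail:
  assumes u: "u \<in> C" and v: "v \<in> C"
  shows "pi womega (\<lambda>a. if a = 0 then u else v) = om_mult pi u (om_omega pi v)"
proof -
  let ?f = "\<lambda>a::nat. if a = 0 then u else v"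
  have f_closed: "\<And>i. ?f i \<in> C" using u v by simp
  let ?tail = "Restr womega (- {0})"
  have "om_omega pi v = pi ?tail ?f"
    unfolding om_omega_def
  proof (rule pi_regroup[OF Well_order_Restr_womega _ Well_order_womega, where g = "\<lambda>i. i - 1"])
    fix j
    have "Restr ?tail {i \<in> Field ?tail. i - 1 = j} = {(Suc j, Suc j)}"
      unfolding Field_Restr_womega by (auto simp: womega_def)
    then show "v = pi (Restr ?tail {i \<in> Field ?tail. i - 1 = j}) ?f"
      using pi_singleton[of ?f "Suc j"] v by simp
  next
    show "(i - 1, j - 1) \<in> womega" if "(i, j) \<in> ?tail" for i j
      using that by (auto simp: womega_def)
  qed (use v in auto)
  moreover have "pi womega ?f = om_mult pi (pi (Restr womega {0}) ?f) (pi ?tail ?f)"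
    using f_closed by (intro pi_split Well_order_womega) (auto simp: womega_def)
  moreover have "Restr womega {0} = {(0, 0)}"
    by (auto simp: womega_def)
  ultimately show ?thesis
    using pi_singleton[of ?f 0] u by simp
qed

lemma pi_omega_prefix_loop:
  assumes w: "\<And>i. i < n \<Longrightarrow> w i \<in> C" and w': "\<And>i. i < m \<Longrightarrow> w' i \<in> C"
    and n: "n \<ge> 1" and m: "m \<ge> 1"
  shows "pi womega (\<lambda>i. if i < n then w i else w' ((i - n) mod m))
       = om_mult pi (seg_prod pi w 0 n) (om_omega pi (seg_prod pi w' 0 m))"
    (is "pi womega ?f = _")
proof -
  have f_closed: "\<And>i. ?f i \<in> C" using w w' m by auto
  define h where "h a = (if a = 0 then 0 else n + (a - 1) * m)" for a
  have h: "strict_mono h"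
  proof (rule strict_monoI)
    fix a b :: nat assume "a < b"
    then show "h a < h b"
      using n m by (cases "a = 0") (auto simp: h_def)
  qed
  have blocks: "seg_prod pi ?f (h a) (h (Suc a) - h a)
      = (if a = 0 then seg_prod pi w 0 n else seg_prod pi w' 0 m)" for a
  proof (cases a)
    case 0
    then show ?thesis by (auto simp: h_def intro: seg_prod_cong)
  next
    case (Suc b)
    have "h (Suc a) - h a = m" "h a = n + b * m"
      using Suc by (simp_all add: h_def algebra_simps)
    moreover have "seg_prod pi ?f (n + b * m) m = seg_prod pi w' 0 m"
      by (rule seg_prod_cong) simp
    ultimately show ?thesis using Suc by simp
  qed
  have "pi womega ?f = pi womega (\<lambda>a. seg_prod pi ?f (h a) (h (Suc a) - h a))"
    by (rule pi_omega_blocks[OF f_closed h]) (simp add: h_def)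
  also have "\<dots> = pi womega (\<lambda>a. if a = 0 then seg_prod pi w 0 n else seg_prod pi w' 0 m)"
    unfolding blocks ..
  also have "\<dots> = om_mult pi (seg_prod pi w 0 n) (om_omega pi (seg_prod pi w' 0 m))"
    using w w' by (intro pi_omega_head_tail seg_prod_in_submonoid[of C]) (auto simp: mult_closed one_closed)
  finally show ?thesis .
qed

lemma pi_omega_ramsey:
  assumes fin: "finite C" and f: "\<And>i. f i \<in> C"
  shows "\<exists>n m. n \<ge> 1 \<and> m \<ge> 1 \<and>
           pi womega f = om_mult pi (seg_prod pi f 0 n) (om_omega pi (seg_prod pi f n m))"
proof -
  let ?c = "\<lambda>i j. seg_prod pi f i (j - i)"
  have "range (case_prod ?c) \<subseteq> C"
    using seg_prod_closed[OF f] by auto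
  then have "finite (range (case_prod ?c))"
    using fin by (rule finite_subset)
  then obtain e :: "nat \<Rightarrow> nat" and t where e: "strict_mono e" and t: "\<And>a b. a < b \<Longrightarrow> ?c (e a) (e b) = t"
    using Ramsey_pairs_strict_mono by blast
  define h where "h a = (if a = 0 then 0 else e a)" for a
  have h: "strict_mono h"
  proof (rule strict_monoI)
    fix a b :: nat assume "a < b"
    then show "h a < h b"
      unfolding h_def using strict_monoD[OF e, of 0 b] strict_monoD[OF e, of a b] by auto
  qed
  define u where "u = seg_prod pi f 0 (e 1)"
  have "pi womega f = pi womega (\<lambda>a. seg_prod pi f (h a) (h (Suc a) - h a))"
    by (rule pi_omega_blocks[OF f h]) (simp add: h_def)
  also have "\<dots> = pi womega (\<lambda>a. if a = 0 then u else t)"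
  proof (rule pi_cong[OF Well_order_womega])
    fix a
    show "seg_prod pi f (h a) (h (Suc a) - h a) \<in> C"
      using seg_prod_closed[OF f] .
    show "seg_prod pi f (h a) (h (Suc a) - h a) = (if a = 0 then u else t)"
      using t[of a "Suc a"] by (auto simp: h_def u_def)
  qed
  also have "\<dots> = om_mult pi u (om_omega pi t)"
    using t[of 1 2, symmetric] by (intro pi_omega_head_tail) (auto simp: u_def seg_prod_closed f)
  finally show ?thesis
    using strict_monoD[OF e, of 0 1] strict_monoD[OF e, of 1 2] t[of 1 2] unfolding u_def
    by (intro exI[of _ "e 1"] exI[of _ "e 2 - e 1"]) auto
qed

end

context ordinal_monoid_on
begin

context
  fixes S :: "'a set"
  assumes fin: "finite C" and S_subset: "S \<subseteq> C" and one_in_S: "om_one pi \<in> S"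
    and mult_in_S: "\<And>x y. x \<in> S \<Longrightarrow> y \<in> S \<Longrightarrow> om_mult pi x y \<in> S"
    and omega_in_S: "\<And>x. x \<in> S \<Longrightarrow> om_omega pi x \<in> S"
begin

lemma pi_Restr_in_closed_subset_step:
  assumes WO: "Well_order r" and A: "A \<subseteq> Field r" and F: "\<forall>i\<in>A. F i \<in> S"
    and below: "\<And>a B. a \<in> Field r \<Longrightarrow> B \<subseteq> underS r a \<Longrightarrow> B \<subseteq> A \<Longrightarrow> pi (Restr r B) F \<in> S"
  shows "pi (Restr r A) F \<in> S"
proof -
  have FA: "Field (Restr r A) = A"
    using Refl_Field_Restr2[OF _ A] WO by (simp add: order_on_defs)
  have WOA: "Well_order (Restr r A)"
    using Well_order_Restr[OF WO] .
  have F_closed: "\<And>i. i \<in> Field (Restr r A) \<Longrightarrow> F i \<in> C"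
    using F S_subset FA by auto
  consider "A = {}" | m where "m \<in> A" "\<forall>i\<in>A. (i, m) \<in> r"
    | "A \<noteq> {}" "\<not> (\<exists>m\<in>A. \<forall>i\<in>A. (i, m) \<in> r)"
    by blast
  then show ?thesis
  proof cases
    case 1
    then show ?thesis using one_in_S pi_empty by simp
  next
    case (2 m)
    have "pi (Restr r A) F
        = om_mult pi (pi (Restr (Restr r A) (- {m})) F) (pi (Restr (Restr r A) (- (- {m}))) F)"
      using 2 WO by (intro pi_split[OF WOA F_closed]) (auto simp: order_on_defs dest: antisymD)
    also have "Restr (Restr r A) (- {m}) = Restr r (A - {m})"
      by auto
    also have "Restr (Restr r A) (- (- {m})) = {(m, m)}"
      using 2 A WO by (auto simp: order_on_defs refl_on_def)
    moreover have "pi (Restr r (A - {m})) F \<in> S"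
      using 2 A by (intro below[of m]) (auto simp: underS_def)
    ultimately show ?thesis
      using 2 F S_subset mult_in_S pi_singleton[of F m] by auto
  next
    case 3
    then obtain g :: "nat \<Rightarrow> nat" where g_mono: "\<And>i j. (i, j) \<in> Restr r A \<Longrightarrow> g i \<le> g j"
      and blocks: "\<And>k. \<exists>z\<in>A. {i \<in> A. g i = k} \<subseteq> underS r z"
      using Restr_nomax_countable_blocks[OF WO A] by blast
    let ?G = "\<lambda>k. pi (Restr (Restr r A) {i \<in> Field (Restr r A). g i = k}) F"
    have G_in_S: "?G k \<in> S" for k
    proof -
      obtain z where "z \<in> A" "{i \<in> A. g i = k} \<subseteq> underS r z"
        using blocks by blast
      then have "pi (Restr r {i \<in> A. g i = k}) F \<in> S"
        using A by (intro below) auto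
      moreover have "Restr (Restr r A) {i \<in> Field (Restr r A). g i = k} = Restr r {i \<in> A. g i = k}"
        unfolding FA by auto
      ultimately show ?thesis by simp
    qed
    have "pi womega ?G = pi (Restr r A) F"
    proof (rule pi_assoc[OF WOA F_closed Well_order_womega])
      show "(g i, g j) \<in> womega" if "(i, j) \<in> Restr r A" for i j
        using g_mono[OF that] by (simp add: womega_def)
      show "g ` Field (Restr r A) \<subseteq> Field womega"
        by (simp add: Field_womega)
    qed
    then have "pi (Restr r A) F = pi womega ?G" ..
    also obtain n m where "\<dots> = om_mult pi (seg_prod pi ?G 0 n) (om_omega pi (seg_prod pi ?G n m))"
      using pi_omega_ramsey[OF fin, of ?G] G_in_S S_subset by blast
    finally show ?thesis
      using G_in_S by (simp add: mult_in_S omega_in_S seg_prod_in_submonoid one_in_S)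
  qed
qed

lemma pi_in_closed_subset:
  assumes "om_word S r F"
  shows "pi r F \<in> S"
proof -
  have "\<forall>A F. A \<subseteq> Field r \<longrightarrow> (\<forall>i\<in>A. F i \<in> S) \<longrightarrow> pi (Restr r A) F \<in> S"
    if "Well_order r" for r
    using that
  proof (induction r rule: wf_induct[OF wf_ordLess])
    case (1 r)
    show ?case
    proof (intro allI impI)
      fix A F assume A: "A \<subseteq> Field r" and F: "\<forall>i\<in>A. F i \<in> S"
      show "pi (Restr r A) F \<in> S"
      proof (rule pi_Restr_in_closed_subset_step[OF "1.prems" A F])
        fix a B assume a: "a \<in> Field r" and B: "B \<subseteq> underS r a" "B \<subseteq> A"
        let ?r = "Restr r (underS r a)"
        have "Field r \<noteq> {}" using a by blast
        then have "(?r, r) \<in> ordLess"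
          by (rule underS_Restr_ordLess[OF "1.prems"])
        moreover have "Well_order ?r"
          using Well_order_Restr[OF "1.prems"] .
        moreover have "B \<subseteq> Field ?r"
          using Refl_Field_Restr2[of r "underS r a"] "1.prems" B underS_Field[of _ r a]
          by (auto simp: order_on_defs)
        ultimately have "pi (Restr ?r B) F \<in> S"
          using "1.IH" F B by blast
        moreover have "Restr ?r B = Restr r B"
          using B by auto
        ultimately show "pi (Restr r B) F \<in> S" by simp
      qed
    qed
  qed
  moreover have "Well_order r" and "\<forall>i\<in>Field r. F i \<in> S"
    using assms unfolding om_word_def by auto
  ultimately have "pi (Restr r (Field r)) F \<in> S"
    by blast
  then show ?thesis
    by (simp add: Restr_Field)
qed

end

end

section \<open>The power ordinal monoid\<close>

context ordinal_monoid_on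
begin

abbreviation ppow :: "'a set \<Rightarrow> nat \<Rightarrow> 'a set" where "ppow a n \<equiv> spow (pmul pi) {om_one pi} a n"

lemma pmul_closed: "X \<subseteq> C \<Longrightarrow> Y \<subseteq> C \<Longrightarrow> pmul pi X Y \<subseteq> C"
  unfolding pmul_def using mult_closed by blast

lemma pmul_mono: "X \<subseteq> X' \<Longrightarrow> Y \<subseteq> Y' \<Longrightarrow> pmul pi X Y \<subseteq> pmul pi X' Y'"
  unfolding pmul_def by blast

lemma pmulI: "x \<in> X \<Longrightarrow> y \<in> Y \<Longrightarrow> om_mult pi x y \<in> pmul pi X Y"
  unfolding pmul_def by blast

lemma pmulE: "z \<in> pmul pi X Y \<Longrightarrow> (\<And>x y. z = om_mult pi x y \<Longrightarrow> x \<in> X \<Longrightarrow> y \<in> Y \<Longrightarrow> Q) \<Longrightarrow> Q"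
  unfolding pmul_def by blast

lemma pmul_assoc: assumes "X \<subseteq> C" "Y \<subseteq> C" "Z \<subseteq> C"
  shows "pmul pi (pmul pi X Y) Z = pmul pi X (pmul pi Y Z)"
proof
  show "pmul pi (pmul pi X Y) Z \<subseteq> pmul pi X (pmul pi Y Z)"
  proof
    fix w assume "w \<in> pmul pi (pmul pi X Y) Z"
    then obtain a z where w: "w = om_mult pi a z" and a: "a \<in> pmul pi X Y" and z: "z \<in> Z" by (rule pmulE)
    from a obtain x y where a': "a = om_mult pi x y" and x: "x \<in> X" and y: "y \<in> Y" by (rule pmulE)
    have "w = om_mult pi x (om_mult pi y z)" unfolding w a'
      using x y z assms by (intro mult_assoc) auto
    then show "w \<in> pmul pi X (pmul pi Y Z)" using pmulI[OF x pmulI[OF y z]] by simp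
  qed
  show "pmul pi X (pmul pi Y Z) \<subseteq> pmul pi (pmul pi X Y) Z"
  proof
    fix w assume "w \<in> pmul pi X (pmul pi Y Z)"
    then obtain x a where w: "w = om_mult pi x a" and a: "a \<in> pmul pi Y Z" and x: "x \<in> X" by (rule pmulE)
    from a obtain y z where a': "a = om_mult pi y z" and y: "y \<in> Y" and z: "z \<in> Z" by (rule pmulE)
    have "w = om_mult pi (om_mult pi x y) z" unfolding w a'
      using x y z assms by (intro mult_assoc[symmetric]) auto
    then show "w \<in> pmul pi (pmul pi X Y) Z" using pmulI[OF pmulI[OF x y] z] by simp
  qed
qed

lemma pmul_UN_left: "pmul pi (\<Union>i\<in>I. X i) Y = (\<Union>i\<in>I. pmul pi (X i) Y)"
  unfolding pmul_def by blast

lemma pmul_UN_right: "pmul pi X (\<Union>i\<in>I. Y i) = (\<Union>i\<in>I. pmul pi X (Y i))"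
  unfolding pmul_def by blast

lemma pmul_one_left: "X \<subseteq> C \<Longrightarrow> pmul pi {om_one pi} X = X"
  unfolding pmul_def using mult_one_left by force

lemma pmul_one_right: "X \<subseteq> C \<Longrightarrow> pmul pi X {om_one pi} = X"
  unfolding pmul_def using mult_one_right by force

lemma ppow_subset: "a \<subseteq> C \<Longrightarrow> ppow a n \<subseteq> C"
  by (induction n) (auto simp: one_closed pmul_closed)

lemma ppow_mono: assumes ab: "a \<subseteq> b" shows "ppow a n \<subseteq> ppow b n"
proof (induction n)
  case 0 then show ?case by simp
next
  case (Suc n) then show ?case using pmul_mono[OF Suc.IH ab] by simp
qed

lemma ppow_add: "a \<subseteq> C \<Longrightarrow> ppow a (i + j) = pmul pi (ppow a i) (ppow a j)"
proof (induction j)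
  case 0 then show ?case using pmul_one_right[OF ppow_subset] by simp
next
  case (Suc j)
  have "ppow a (i + Suc j) = pmul pi (ppow a (i + j)) a" by simp
  also have "\<dots> = pmul pi (pmul pi (ppow a i) (ppow a j)) a" using Suc by simp
  also have "\<dots> = pmul pi (ppow a i) (pmul pi (ppow a j) a)" using Suc.prems ppow_subset by (intro pmul_assoc) auto
  finally show ?case by simp
qed

lemma ppow_one: "a \<subseteq> C \<Longrightarrow> ppow a 1 = a"
  using pmul_one_left by simp

lemma ppow_mult_swap: assumes a: "a \<subseteq> C" and b: "b \<subseteq> C"
  shows "pmul pi (ppow (pmul pi a b) j) a = pmul pi a (ppow (pmul pi b a) j)"
proof (induction j)
  case 0 then show ?case using pmul_one_left[OF a] pmul_one_right[OF a] by simp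
next
  case (Suc j)
  have ab: "pmul pi a b \<subseteq> C" and ba: "pmul pi b a \<subseteq> C" using pmul_closed[OF a b] pmul_closed[OF b a] by auto
  have "pmul pi (ppow (pmul pi a b) (Suc j)) a = pmul pi (pmul pi (ppow (pmul pi a b) j) (pmul pi a b)) a" by simp
  also have "\<dots> = pmul pi (ppow (pmul pi a b) j) (pmul pi (pmul pi a b) a)"
    using ppow_subset[OF ab] ab a by (intro pmul_assoc) auto
  also have "pmul pi (pmul pi a b) a = pmul pi a (pmul pi b a)" using a b by (intro pmul_assoc) auto
  also have "pmul pi (ppow (pmul pi a b) j) (pmul pi a (pmul pi b a)) = pmul pi (pmul pi (ppow (pmul pi a b) j) a) (pmul pi b a)"
    using ppow_subset[OF ab] ba a by (intro pmul_assoc[symmetric]) auto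
  also have "\<dots> = pmul pi (pmul pi a (ppow (pmul pi b a) j)) (pmul pi b a)" using Suc by simp
  also have "\<dots> = pmul pi a (pmul pi (ppow (pmul pi b a) j) (pmul pi b a))"
    using ppow_subset[OF ba] ba a by (intro pmul_assoc) auto
  finally show ?case by simp
qed

lemma ppow_Suc_swap: assumes a: "a \<subseteq> C" and b: "b \<subseteq> C"
  shows "ppow (pmul pi a b) (Suc j) = pmul pi a (pmul pi (ppow (pmul pi b a) j) b)"
proof -
  have ab: "pmul pi a b \<subseteq> C" and ba: "pmul pi b a \<subseteq> C" using pmul_closed[OF a b] pmul_closed[OF b a] by auto
  have "ppow (pmul pi a b) (Suc j) = pmul pi (ppow (pmul pi a b) j) (pmul pi a b)" by simp
  also have "\<dots> = pmul pi (pmul pi (ppow (pmul pi a b) j) a) b"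
    using ppow_subset[OF ab] a b by (intro pmul_assoc[symmetric]) auto
  also have "\<dots> = pmul pi (pmul pi a (ppow (pmul pi b a) j)) b" using ppow_mult_swap[OF a b] by simp
  also have "\<dots> = pmul pi a (pmul pi (ppow (pmul pi b a) j) b)"
    using ppow_subset[OF ba] a b by (intro pmul_assoc) auto
  finally show ?thesis .
qed

lemma ppow_eq_seg_prods: "ppow X n = {seg_prod pi w 0 n | w. \<forall>i<n. w i \<in> X}"
proof (induction n)
  case 0 then show ?case by simp
next
  case (Suc n)
  show ?case
  proof
    show "ppow X (Suc n) \<subseteq> {seg_prod pi w 0 (Suc n) | w. \<forall>i<Suc n. w i \<in> X}"
    proof
      fix z assume "z \<in> ppow X (Suc n)"
      then have "z \<in> pmul pi (ppow X n) X" by simp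
      then obtain u x where z: "z = om_mult pi u x" and u: "u \<in> ppow X n" and x: "x \<in> X" by (rule pmulE)
      from u obtain w where u': "u = seg_prod pi w 0 n" and w: "\<forall>i<n. w i \<in> X" using Suc by blast
      define w' where "w' = w(n := x)"
      have "seg_prod pi w' 0 n = seg_prod pi w 0 n" by (rule seg_prod_cong) (simp add: w'_def)
      then have "z = seg_prod pi w' 0 (Suc n)" using z u' by (simp add: w'_def)
      moreover have "\<forall>i<Suc n. w' i \<in> X" using w x by (simp add: w'_def less_Suc_eq)
      ultimately show "z \<in> {seg_prod pi w 0 (Suc n) | w. \<forall>i<Suc n. w i \<in> X}" by blast
    qed
    show "{seg_prod pi w 0 (Suc n) | w. \<forall>i<Suc n. w i \<in> X} \<subseteq> ppow X (Suc n)"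
    proof
      fix z assume "z \<in> {seg_prod pi w 0 (Suc n) | w. \<forall>i<Suc n. w i \<in> X}"
      then obtain w where z: "z = seg_prod pi w 0 (Suc n)" and w: "\<forall>i<Suc n. w i \<in> X" by blast
      have "seg_prod pi w 0 n \<in> ppow X n" using Suc w by auto
      then have "om_mult pi (seg_prod pi w 0 n) (w n) \<in> pmul pi (ppow X n) X" using w by (intro pmulI) auto
      then show "z \<in> ppow X (Suc n)" using z by simp
    qed
  qed
qed

lemma pplus_eq_seg_prods: "pplus pi X = {seg_prod pi w 0 n | w n. n \<ge> 1 \<and> (\<forall>i<n. w i \<in> X)}"
  unfolding pplus_def ppow_eq_seg_prods by blast

end

definition power_pi :: "(nat rel \<Rightarrow> (nat \<Rightarrow> 'a) \<Rightarrow> 'a) \<Rightarrow> nat rel \<Rightarrow> (nat \<Rightarrow> 'a set) \<Rightarrow> 'a set" where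
  "power_pi pi r F = {pi r f | f. \<forall>i\<in>Field r. f i \<in> F i}"

lemma power_pi_cong: "(\<And>i. i \<in> Field r \<Longrightarrow> F i = F' i) \<Longrightarrow> power_pi pi r F = power_pi pi r F'"
  unfolding power_pi_def by (metis (no_types, lifting))

lemma power_pi_mono: "(\<And>i. i \<in> Field r \<Longrightarrow> F i \<subseteq> F' i) \<Longrightarrow> power_pi pi r F \<subseteq> power_pi pi r F'"
  unfolding power_pi_def by blast

context ordinal_monoid_on
begin

lemma power_pi_closed:
  assumes r: "Well_order r" and F: "\<And>i. i \<in> Field r \<Longrightarrow> F i \<subseteq> C"
  shows "power_pi pi r F \<subseteq> C"
proof
  fix x assume "x \<in> power_pi pi r F"
  then obtain f where x: "x = pi r f" and f: "\<forall>i\<in>Field r. f i \<in> F i"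
    unfolding power_pi_def by blast
  have "pi r f \<in> C"
  proof (rule pi_closed[OF r])
    fix i assume "i \<in> Field r"
    with f F show "f i \<in> C" by blast
  qed
  with x show "x \<in> C" by simp
qed

lemma power_pi_singleton:
  assumes F: "F i \<subseteq> C"
  shows "power_pi pi {(i, i)} F = F i"
proof (intro equalityI subsetI)
  have Field: "Field {(i, i)} = {i}" by (auto simp: Field_def)
  fix x
  show "x \<in> F i" if x: "x \<in> power_pi pi {(i, i)} F"
  proof -
    obtain f where "x = pi {(i, i)} f" and "f i \<in> F i"
      using x unfolding power_pi_def Field by blast
    with F pi_singleton[of f i] show ?thesis by auto
  qed
  show "x \<in> power_pi pi {(i, i)} F" if "x \<in> F i"
  proof -
    have "x = pi {(i, i)} (\<lambda>_. x)"
      using that F pi_singleton[of "\<lambda>_. x" i] by auto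
    with that show ?thesis unfolding power_pi_def Field by auto
  qed
qed

lemma power_pi_assoc:
  assumes r: "Well_order r" and F: "\<And>i. i \<in> Field r \<Longrightarrow> F i \<subseteq> C" and s: "Well_order s"
    and g: "g ` Field r \<subseteq> Field s" and mono: "\<And>i j. (i, j) \<in> r \<Longrightarrow> (g i, g j) \<in> s"
  shows "power_pi pi s (\<lambda>j. power_pi pi (Restr r {i \<in> Field r. g i = j}) F) = power_pi pi r F"
proof -
  define R where "R j = Restr r {i \<in> Field r. g i = j}" for j
  have R_Field: "Field (R j) = {i \<in> Field r. g i = j}" for j
    unfolding R_def using r by (intro Refl_Field_Restr2) (auto simp: order_on_defs)
  have R: "Well_order (R j)" for j
    unfolding R_def by (rule Well_order_Restr[OF r])
  have regroup: "pi s (\<lambda>j. pi (R j) f) = pi r f" if "\<And>i. i \<in> Field r \<Longrightarrow> f i \<in> C" for f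
    unfolding R_def by (rule pi_assoc[OF r that s g mono])
  have "power_pi pi s (\<lambda>j. power_pi pi (R j) F) = power_pi pi r F"
  proof (intro equalityI subsetI)
    fix x assume "x \<in> power_pi pi r F"
    then obtain f where x: "x = pi r f" and f: "\<forall>i\<in>Field r. f i \<in> F i"
      unfolding power_pi_def by blast
    have "pi (R j) f \<in> power_pi pi (R j) F" for j
      using f unfolding power_pi_def R_Field by blast
    moreover have "x = pi s (\<lambda>j. pi (R j) f)"
      using x f F by (subst regroup) blast+
    ultimately show "x \<in> power_pi pi s (\<lambda>j. power_pi pi (R j) F)"
      unfolding power_pi_def by blast
  next
    fix x assume "x \<in> power_pi pi s (\<lambda>j. power_pi pi (R j) F)"
    then obtain G where x: "x = pi s G" and G: "\<forall>j\<in>Field s. G j \<in> power_pi pi (R j) F"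
      unfolding power_pi_def by blast
    then have "\<forall>j\<in>Field s. \<exists>\<psi>. G j = pi (R j) \<psi> \<and> (\<forall>i\<in>Field (R j). \<psi> i \<in> F i)"
      unfolding power_pi_def by blast
    then obtain \<phi> where \<phi>: "\<forall>j\<in>Field s. G j = pi (R j) (\<phi> j) \<and> (\<forall>i\<in>Field (R j). \<phi> j i \<in> F i)"
      by metis
    define f where "f i = \<phi> (g i) i" for i
    have f: "f i \<in> F i" if "i \<in> Field r" for i
      using \<phi> g that unfolding f_def R_Field by blast
    have "G j = pi (R j) f" if j: "j \<in> Field s" for j
    proof -
      have "pi (R j) (\<phi> j) = pi (R j) f"
        using \<phi> F j unfolding f_def R_Field by (intro pi_cong[OF R]) (auto simp: R_Field)
      then show ?thesis using \<phi> j by simp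
    qed
    moreover have "pi (R j) f \<in> C" for j
      using f F by (intro pi_closed[OF R]) (auto simp: R_Field)
    ultimately have "x = pi s (\<lambda>j. pi (R j) f)"
      unfolding x by (intro pi_cong[OF s]) auto
    also have "\<dots> = pi r f"
      using f F by (intro regroup) blast
    finally show "x \<in> power_pi pi r F"
      unfolding power_pi_def using f by blast
  qed
  then show ?thesis unfolding R_def .
qed

lemma ordinal_monoid_power_pi: "ordinal_monoid (Pow C) (power_pi pi)"
  unfolding ordinal_monoid_def om_word_def
proof (intro conjI allI impI)
  fix r :: "nat rel" and F F' :: "nat \<Rightarrow> 'a set" and s :: "nat rel" and g :: "nat \<Rightarrow> nat"
  assume w: "Well_order r \<and> F ` Field r \<subseteq> Pow C"
  then show "power_pi pi r F \<in> Pow C"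
    using power_pi_closed by blast
  show "\<forall>i\<in>Field r. F i = F' i \<Longrightarrow> power_pi pi r F = power_pi pi r F'"
    by (rule power_pi_cong) blast
  show "Well_order s \<Longrightarrow> g ` Field r \<subseteq> Field s \<Longrightarrow> \<forall>i j. (i, j) \<in> r \<longrightarrow> (g i, g j) \<in> s \<Longrightarrow>
      power_pi pi s (\<lambda>j. power_pi pi (Restr r {i \<in> Field r. g i = j}) F) = power_pi pi r F"
    using w by (intro power_pi_assoc) blast+
next
  fix i and F :: "nat \<Rightarrow> 'a set"
  show "F i \<in> Pow C \<Longrightarrow> power_pi pi {(i, i)} F = F i"
    by (rule power_pi_singleton) blast
qed

lemma power_pi_empty: "power_pi pi {} F = {om_one pi}"
  unfolding power_pi_def using pi_empty by simp

lemma om_one_power_pi: "om_one (power_pi pi) = {om_one pi}"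
  unfolding om_one_def[of "power_pi pi"] by (rule power_pi_empty)

lemma om_mult_power_pi:
  assumes X: "X \<subseteq> C" and Y: "Y \<subseteq> C"
  shows "om_mult (power_pi pi) X Y = pmul pi X Y"
proof (intro equalityI subsetI)
  fix x assume "x \<in> om_mult (power_pi pi) X Y"
  then obtain f where x: "x = pi w2 f" and f: "f 0 \<in> X" "f 1 \<in> Y"
    unfolding om_mult_def[of "power_pi pi"] power_pi_def by auto
  have "pi w2 f = om_mult pi (f 0) (f 1)"
    unfolding om_mult_def using f X Y by (intro pi_cong[OF Well_order_w2]) auto
  with x f show "x \<in> pmul pi X Y" by (auto intro: pmulI)
next
  fix x assume "x \<in> pmul pi X Y"
  then obtain u v where x: "x = om_mult pi u v" and "u \<in> X" "v \<in> Y"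
    by (rule pmulE)
  then have "\<forall>i\<in>Field w2. (if i = 0 then u else v) \<in> (if i = 0 then X else Y)"
    by auto
  then show "x \<in> om_mult (power_pi pi) X Y"
    unfolding x om_mult_def power_pi_def by blast
qed

lemma om_omega_power_pi:
  assumes fin: "finite C" and X: "X \<subseteq> C"
  shows "om_omega (power_pi pi) X = pomega pi X"
proof (intro equalityI subsetI)
  fix x assume "x \<in> om_omega (power_pi pi) X"
  then obtain f where x: "x = pi womega f" and f: "\<And>i. f i \<in> X"
    unfolding om_omega_def power_pi_def by auto
  have "\<And>i. f i \<in> C" using f X by blast
  then obtain n m where n: "n \<ge> 1" and m: "m \<ge> 1"
    and "pi womega f = om_mult pi (seg_prod pi f 0 n) (om_omega pi (seg_prod pi f n m))"
    using pi_omega_ramsey[OF fin] by blast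
  moreover have "seg_prod pi f n m = seg_prod pi (\<lambda>i. f (n + i)) 0 m"
    by (rule seg_prod_cong) simp
  moreover have "seg_prod pi f 0 n \<in> pplus pi X"
    unfolding pplus_eq_seg_prods using n f by blast
  moreover have "seg_prod pi (\<lambda>i. f (n + i)) 0 m \<in> pplus pi X"
    unfolding pplus_eq_seg_prods using m f by blast
  ultimately show "x \<in> pomega pi X"
    unfolding pomega_def x by auto
next
  fix x assume "x \<in> pomega pi X"
  then obtain n w m w' where n: "n \<ge> 1" and w: "\<forall>i<n. w i \<in> X" and m: "m \<ge> 1" and w': "\<forall>i<m. w' i \<in> X"
    and x: "x = om_mult pi (seg_prod pi w 0 n) (om_omega pi (seg_prod pi w' 0 m))"
    unfolding pomega_def pplus_eq_seg_prods by blast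
  then have "x = pi womega (\<lambda>i. if i < n then w i else w' ((i - n) mod m))"
    using X by (subst pi_omega_prefix_loop) auto
  moreover have "(if i < n then w i else w' ((i - n) mod m)) \<in> X" for i
    using w w' m by auto
  ultimately show "x \<in> om_omega (power_pi pi) X"
    unfolding om_omega_def power_pi_def by auto
qed

end

section \<open>Eventually periodic powers and the merge operation\<close>

lemma iterate_eventually_periodic:
  fixes s :: "nat \<Rightarrow> 'x"
  assumes fin: "finite (range s)" and step: "\<And>n. s (Suc n) = F (s n)"
  shows "\<exists>N p. p > 0 \<and> (\<forall>n\<ge>N. s (n + p) = s n)"
proof -
  obtain a b where ab: "a < b" "s a = s b"
  proof -
    have "\<not> inj s"
      using fin finite_imageD infinite_UNIV_nat by blast
    then obtain i j where "i \<noteq> j" "s i = s j" unfolding inj_def by blast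
    then show ?thesis using that by (cases "i < j") (auto simp: not_less_iff_gr_or_eq)
  qed
  have "s (a + t + (b - a)) = s (a + t)" for t
  proof (induction t)
    case 0 then show ?case using ab by simp
  next
    case (Suc t) then show ?case using step[of "a + t + (b - a)"] step[of "a + t"] by simp
  qed
  then have "\<forall>n\<ge>a. s (n + (b - a)) = s n"
    by (metis le_add_diff_inverse)
  then show ?thesis using ab(1) by (intro exI[of _ a] exI[of _ "b - a"]) simp
qed

lemma periodic_mod_cong:
  fixes s :: "nat \<Rightarrow> 'x"
  assumes per: "\<forall>n\<ge>N. s (n + p) = s n" and i: "i \<ge> N" and j: "j \<ge> N"
    and mod: "i mod p = j mod p"
  shows "s i = s j"
proof -
  have shift: "s (n + t * p) = s n" if "n \<ge> N" for n t
  proof (induction t)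
    case (Suc t)
    have "s (n + Suc t * p) = s ((n + t * p) + p)" by (simp add: algebra_simps)
    also have "\<dots> = s (n + t * p)" using per that by simp
    finally show ?case using Suc by simp
  qed simp
  have "s x = s y" if xy: "x \<le> y" "x \<ge> N" "x mod p = y mod p" for x y
  proof -
    obtain t where "y - x = p * t"
      using mod_eq_dvd_iff_nat[OF xy(1), of p] xy(3) by (auto elim: dvdE)
    then have "y = x + t * p" using xy(1) by (simp add: algebra_simps)
    then show ?thesis using shift[OF xy(2)] by simp
  qed
  then show ?thesis using i j mod by (cases "i \<le> j") (auto simp: not_le intro: sym)
qed

text \<open>Since p divides n! for n \<ge> p, the exponent n! + k eventually stays in the residue class
  of k modulo p.\<close>

lemma bangp_eq_spow:
  assumes p: "p > 0" and per: "\<forall>n\<ge>N. spow m e a (n + p) = spow m e a n"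
    and j: "j \<ge> N" and jk: "int j mod int p = k mod int p"
  shows "bangp m e a k = spow m e a j"
proof -
  let ?s = "spow m e a"
  define N' where "N' = p + N + nat \<bar>k\<bar>"
  have eventually: "?s (nat (int (fact n) + k)) = ?s j" if n: "n \<ge> N'" for n
  proof -
    have "int n \<le> int (fact n)" by (simp only: of_nat_le_iff fact_ge_self)
    moreover have "int n \<ge> int N + int p + \<bar>k\<bar>" using n unfolding N'_def by simp
    ultimately have ge: "int (fact n) + k \<ge> int N" by simp
    define q where "q = nat (int (fact n) + k)"
    have q: "q \<ge> N" "int q = int (fact n) + k" using ge unfolding q_def by simp_all
    have "p dvd fact n" using p n unfolding N'_def by (intro dvd_fact) auto
    then have "int q mod int p = k mod int p"
      unfolding q(2) by (metis mod_add_left_eq mod_0 of_nat_dvd_iff dvd_imp_mod_0 add_0)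
    then have "q mod p = j mod p" using jk by (metis of_nat_eq_iff zmod_int)
    then show ?thesis unfolding q_def[symmetric] by (rule periodic_mod_cong[OF per q(1) j])
  qed
  show ?thesis unfolding bangp_def
  proof (rule the_equality)
    show "\<exists>N. \<forall>n\<ge>N. ?s (nat (int (fact n) + k)) = ?s j" using eventually by blast
    fix y assume "\<exists>N. \<forall>n\<ge>N. ?s (nat (int (fact n) + k)) = y"
    then obtain N'' where "\<forall>n\<ge>N''. ?s (nat (int (fact n) + k)) = y" by blast
    with eventually[of "max N' N''"] show "y = ?s j" by simp
  qed
qed

lemma bangp_in_tail:
  assumes p: "p > 0" and per: "\<forall>n\<ge>N. spow m e a (n + p) = spow m e a n" and L: "L \<ge> N"
  shows "\<exists>j\<ge>L. bangp m e a k = spow m e a j"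
proof -
  define j where "j = L * p + nat (k mod int p)"
  have "j \<ge> L" using p unfolding j_def by (simp add: trans_le_add1)
  moreover have "int j mod int p = k mod int p"
    using p unfolding j_def by (simp add: of_nat_mult)
  ultimately show ?thesis using L by (intro exI[of _ j]) (auto intro: bangp_eq_spow[OF p per])
qed

lemma UN_bangp_eq_tail:
  fixes m :: "'b set \<Rightarrow> 'b set \<Rightarrow> 'b set"
  assumes p: "p > 0" and per: "\<forall>n\<ge>N. spow m e a (n + p) = spow m e a n" and L: "L \<ge> N"
  shows "(\<Union>k::nat. bangp m e a (int k)) = (\<Union>j\<in>{L..}. spow m e a j)"
proof (intro equalityI UN_least)
  show "bangp m e a (int k) \<subseteq> (\<Union>j\<in>{L..}. spow m e a j)" for k
    using bangp_in_tail[OF p per L, of "int k"] by auto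
  show "spow m e a j \<subseteq> (\<Union>k. bangp m e a (int k))" if "j \<in> {L..}" for j
  proof -
    have "bangp m e a (int j) = spow m e a j"
      using that L by (intro bangp_eq_spow[OF p per]) auto
    then show ?thesis by (metis UNIV_I UN_upper)
  qed
qed

lemma bangp_zero_idem_index:
  assumes p: "p > 0" and per: "\<forall>n\<ge>N. spow m e a (n + p) = spow m e a n"
  shows "\<exists>j. bangp m e a 0 = spow m e a j \<and> spow m e a (j + j) = spow m e a j"
proof -
  have N: "N \<le> N * p" using p by simp
  have "bangp m e a 0 = spow m e a (N * p)"
    using N by (intro bangp_eq_spow[OF p per]) (auto simp: of_nat_mult)
  moreover have "spow m e a (N * p + N * p) = spow m e a (N * p)"
  proof (rule periodic_mod_cong[OF per])
    show "N \<le> N * p + N * p" using N by (rule trans_le_add1)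
  qed (use N in auto)
  ultimately show ?thesis by blast
qed

context ordinal_monoid_on
begin

lemma ppow_eventually_periodic:
  assumes fin: "finite C" and X: "X \<subseteq> C"
  shows "\<exists>N p. p > 0 \<and> (\<forall>n\<ge>N. ppow X (n + p) = ppow X n)"
proof (rule iterate_eventually_periodic[where F = "\<lambda>Y. pmul pi Y X"])
  show "finite (range (ppow X))"
    using ppow_subset[OF X] fin by (auto intro: finite_subset[of _ "Pow C"])
qed simp

lemma psharp_eq_tail:
  assumes fin: "finite C" and X: "X \<subseteq> C"
  shows "\<exists>N. \<forall>L\<ge>N. psharp pi X = (\<Union>j\<in>{L..}. ppow X j)"
proof -
  obtain N p where p: "p > 0" and per: "\<forall>n\<ge>N. ppow X (n + p) = ppow X n"
    using ppow_eventually_periodic[OF fin X] by blast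
  then show ?thesis
    unfolding psharp_def using UN_bangp_eq_tail[OF p per] by blast
qed

lemma bangp_subset_psharp:
  assumes fin: "finite C" and X: "X \<subseteq> C"
  shows "bangp (pmul pi) {om_one pi} X k \<subseteq> psharp pi X"
proof -
  obtain N p where p: "p > 0" and per: "\<forall>n\<ge>N. ppow X (n + p) = ppow X n"
    using ppow_eventually_periodic[OF fin X] by blast
  obtain j where "j \<ge> N" and "bangp (pmul pi) {om_one pi} X k = ppow X j"
    using bangp_in_tail[OF p per order_refl] by blast
  then show ?thesis
    unfolding psharp_def UN_bangp_eq_tail[OF p per order_refl] by auto
qed

lemma psharp_closed:
  assumes fin: "finite C" and X: "X \<subseteq> C"
  shows "psharp pi X \<subseteq> C"
  using psharp_eq_tail[OF fin X] ppow_subset[OF X] by blast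

lemma psharp_mono:
  assumes fin: "finite C" and Y: "Y \<subseteq> C" and XY: "X \<subseteq> Y"
  shows "psharp pi X \<subseteq> psharp pi Y"
proof -
  obtain NX NY where
    NX: "\<And>L. L \<ge> NX \<Longrightarrow> psharp pi X = (\<Union>j\<in>{L..}. ppow X j)" and
    NY: "\<And>L. L \<ge> NY \<Longrightarrow> psharp pi Y = (\<Union>j\<in>{L..}. ppow Y j)"
    using psharp_eq_tail[OF fin] XY Y by (metis order_trans)
  have "psharp pi X = (\<Union>j\<in>{max NX NY..}. ppow X j)"
    by (rule NX) simp
  also have "\<dots> \<subseteq> (\<Union>j\<in>{max NX NY..}. ppow Y j)"
    by (intro UN_mono order_refl ppow_mono[OF XY])
  also have "\<dots> = psharp pi Y"
    by (rule NY[symmetric]) simp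
  finally show ?thesis .
qed

lemma psharp_idem:
  assumes fin: "finite C" and E: "E \<subseteq> C" and EE: "pmul pi E E = E"
  shows "psharp pi E = E"
proof -
  have E_pow: "ppow E (Suc n) = E" for n
    using ppow_one[OF E] EE by (induction n) auto
  obtain N where "psharp pi E = (\<Union>j\<in>{Suc N..}. ppow E j)"
    using psharp_eq_tail[OF fin E] by (meson le_SucI order_refl)
  also have "\<dots> = (\<Union>j\<in>{Suc N..}. E)"
    by (intro SUP_cong refl) (auto dest!: Suc_le_D simp del: spow.simps simp: E_pow)
  also have "\<dots> = E"
    using atLeast_iff[of "Suc N" "Suc N"] by (simp only: UN_constant) auto
  finally show ?thesis .
qed

lemma pmul_psharp_self:
  assumes fin: "finite C" and X: "X \<subseteq> C"
  shows "pmul pi (psharp pi X) (psharp pi X) = psharp pi X"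
proof -
  obtain N where N: "\<And>L. L \<ge> N \<Longrightarrow> psharp pi X = (\<Union>j\<in>{L..}. ppow X j)"
    using psharp_eq_tail[OF fin X] by blast
  have "pmul pi (psharp pi X) (psharp pi X) = (\<Union>j\<in>{N..}. \<Union>i\<in>{N..}. ppow X (i + j))"
    unfolding N[OF order_refl] pmul_UN_left pmul_UN_right ppow_add[OF X] ..
  also have "\<dots> = (\<Union>l\<in>{N + N..}. ppow X l)"
  proof (intro equalityI subsetI)
    fix z assume "z \<in> (\<Union>l\<in>{N + N..}. ppow X l)"
    then obtain l where "l \<ge> N + N" "z \<in> ppow X (N + (l - N))" by auto
    then show "z \<in> (\<Union>j\<in>{N..}. \<Union>i\<in>{N..}. ppow X (i + j))"
      by (intro UN_I[of "l - N"] UN_I[of N]) auto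
  next
    fix z assume "z \<in> (\<Union>j\<in>{N..}. \<Union>i\<in>{N..}. ppow X (i + j))"
    then obtain i j where "i \<ge> N" "j \<ge> N" "z \<in> ppow X (i + j)" by blast
    then show "z \<in> (\<Union>l\<in>{N + N..}. ppow X l)" by (intro UN_I[of "i + j"]) auto
  qed
  also have "\<dots> = psharp pi X"
    by (rule N[symmetric]) simp
  finally show ?thesis .
qed

lemma psharp_pmul_swap:
  assumes fin: "finite C" and a: "a \<subseteq> C" and b: "b \<subseteq> C"
  shows "psharp pi (pmul pi a b) = pmul pi a (pmul pi (psharp pi (pmul pi b a)) b)"
proof -
  obtain N1 N2 where
    N1: "\<And>L. L \<ge> N1 \<Longrightarrow> psharp pi (pmul pi a b) = (\<Union>j\<in>{L..}. ppow (pmul pi a b) j)" and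
    N2: "\<And>L. L \<ge> N2 \<Longrightarrow> psharp pi (pmul pi b a) = (\<Union>j\<in>{L..}. ppow (pmul pi b a) j)"
    using psharp_eq_tail[OF fin pmul_closed[OF a b]] psharp_eq_tail[OF fin pmul_closed[OF b a]]
    by metis
  define L where "L = max N1 N2"
  have Suc_L: "{Suc L..} = Suc ` {L..}"
  proof (intro equalityI subsetI)
    fix x assume "x \<in> {Suc L..}"
    then show "x \<in> Suc ` {L..}" by (intro image_eqI[of _ _ "x - 1"]) auto
  qed auto
  have "psharp pi (pmul pi a b) = (\<Union>j\<in>{Suc L..}. ppow (pmul pi a b) j)"
    by (rule N1) (simp add: L_def)
  also have "\<dots> = (\<Union>j\<in>{L..}. ppow (pmul pi a b) (Suc j))"
    by (simp only: Suc_L image_image)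
  also have "\<dots> = (\<Union>j\<in>{L..}. pmul pi a (pmul pi (ppow (pmul pi b a) j) b))"
    by (simp only: ppow_Suc_swap[OF a b])
  also have "\<dots> = pmul pi a (pmul pi (\<Union>j\<in>{L..}. ppow (pmul pi b a) j) b)"
    by (simp only: pmul_UN_left pmul_UN_right)
  also have "(\<Union>j\<in>{L..}. ppow (pmul pi b a) j) = psharp pi (pmul pi b a)"
    by (rule N2[symmetric]) (simp add: L_def)
  finally show ?thesis .
qed

lemma psharp_bangp_zero:
  assumes fin: "finite C" and X: "X \<subseteq> C"
  shows "psharp pi (bangp (pmul pi) {om_one pi} X 0) = bangp (pmul pi) {om_one pi} X 0"
proof -
  obtain N p where p: "p > 0" and per: "\<forall>n\<ge>N. ppow X (n + p) = ppow X n"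
    using ppow_eventually_periodic[OF fin X] by blast
  obtain j where j: "bangp (pmul pi) {om_one pi} X 0 = ppow X j" and jj: "ppow X (j + j) = ppow X j"
    using bangp_zero_idem_index[OF p per] by blast
  have "pmul pi (ppow X j) (ppow X j) = ppow X j"
    using jj ppow_add[OF X, of j j] by simp
  then show ?thesis
    unfolding j by (rule psharp_idem[OF fin ppow_subset[OF X]])
qed

end

section \<open>Ordinal monoids with merge\<close>

context ordinal_monoid_on
begin

lemma pomega_closed:
  assumes fin: "finite C" and X: "X \<subseteq> C"
  shows "pomega pi X \<subseteq> C"
  unfolding om_omega_power_pi[OF fin X, symmetric] om_omega_def
  using X by (intro power_pi_closed[OF Well_order_womega])

lemma ordered_fin_om_presentation_power_pi:
  assumes fin: "finite C" and D: "D \<subseteq> Pow C"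
    and closed: "\<And>r F. om_word D r F \<Longrightarrow> power_pi pi r F \<in> D"
  shows "ordered_fin_om_presentation D {om_one pi} (\<subseteq>) (pmul pi) (pomega pi)"
  unfolding ordered_fin_om_presentation_def
proof (intro conjI exI[of _ "power_pi pi"] allI ballI)
  show "finite D"
    using fin D by (simp add: finite_subset)
  show "ordinal_monoid D (power_pi pi)"
    unfolding ordinal_monoid_def
  proof (intro conjI allI impI)
    fix r s :: "nat rel" and F F' :: "nat \<Rightarrow> 'a set" and g :: "nat \<Rightarrow> nat" and i :: nat
    show "om_word D r F \<Longrightarrow> power_pi pi r F \<in> D"
      by (rule closed)
    show "\<forall>i\<in>Field r. F i = F' i \<Longrightarrow> power_pi pi r F = power_pi pi r F'"
      by (rule power_pi_cong) blast
    show "F i \<in> D \<Longrightarrow> power_pi pi {(i, i)} F = F i"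
      using D by (intro power_pi_singleton) blast
    assume "om_word D r F" and "Well_order s" and "g ` Field r \<subseteq> Field s"
      and "\<forall>i j. (i, j) \<in> r \<longrightarrow> (g i, g j) \<in> s"
    then show "power_pi pi s (\<lambda>j. power_pi pi (Restr r {i \<in> Field r. g i = j}) F) = power_pi pi r F"
      using D unfolding om_word_def by (intro power_pi_assoc) blast+
  qed
  show "ordered_om D (\<subseteq>) (power_pi pi)"
    unfolding ordered_om_def
  proof (intro conjI ballI allI impI)
    fix r :: "nat rel" and F F' :: "nat \<Rightarrow> 'a set"
    assume "\<forall>i\<in>Field r. F i \<subseteq> F' i"
    then show "power_pi pi r F \<subseteq> power_pi pi r F'"
      by (intro power_pi_mono) blast
  qed auto
  show "power_pi pi {} F = {om_one pi}" for F
    by (rule power_pi_empty)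
  show "pmul pi X Y = om_mult (power_pi pi) X Y" if "X \<in> D" "Y \<in> D" for X Y
    using that D by (intro om_mult_power_pi[symmetric]) auto
  show "pomega pi X = om_omega (power_pi pi) X" if "X \<in> D" for X
    using that D by (intro om_omega_power_pi[OF fin, symmetric]) auto
qed

lemma ordinal_monoid_merge_power_pi:
  assumes fin: "finite C" and D: "D \<subseteq> Pow C"
    and closed: "\<And>r F. om_word D r F \<Longrightarrow> power_pi pi r F \<in> D"
    and sharp_closed: "\<And>X. X \<in> D \<Longrightarrow> psharp pi X \<in> D"
  shows "ordinal_monoid_merge D {om_one pi} (\<subseteq>) (pmul pi) (pomega pi) (psharp pi)"
  unfolding ordinal_monoid_merge_def
proof (intro conjI ballI allI impI)
  show "ordered_fin_om_presentation D {om_one pi} (\<subseteq>) (pmul pi) (pomega pi)"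
    by (rule ordered_fin_om_presentation_power_pi[OF fin D closed])
  fix a assume aD: "a \<in> D"
  then have a: "a \<subseteq> C" using D by blast
  show "psharp pi a \<in> D"
    by (rule sharp_closed[OF aD])
  show "bangp (pmul pi) {om_one pi} a k \<subseteq> psharp pi a" for k
    by (rule bangp_subset_psharp[OF fin a])
  show "psharp pi (bangp (pmul pi) {om_one pi} a 0) = bangp (pmul pi) {om_one pi} a 0"
    by (rule psharp_bangp_zero[OF fin a])
  show idem: "pmul pi (psharp pi a) (psharp pi a) = psharp pi a"
    by (rule pmul_psharp_self[OF fin a])
  show "psharp pi (psharp pi a) = psharp pi a"
    by (rule psharp_idem[OF fin psharp_closed[OF fin a] idem])
  fix b assume bD: "b \<in> D"
  then have b: "b \<subseteq> C" using D by blast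
  show "a \<subseteq> b \<Longrightarrow> psharp pi a \<subseteq> psharp pi b"
    by (rule psharp_mono[OF fin b])
  show "psharp pi (pmul pi a b) = pmul pi a (pmul pi (psharp pi (pmul pi b a)) b)"
    by (rule psharp_pmul_swap[OF fin a b])
qed

lemma Sat_subset_Pow:
  assumes fin: "finite C" and h: "range h \<subseteq> C"
  shows "Sat pi h \<subseteq> Pow C"
proof
  fix X assume "X \<in> Sat pi h"
  then show "X \<in> Pow C"
    by induction (use h in \<open>auto simp: one_closed pmul_closed psharp_closed[OF fin] pomega_closed[OF fin]\<close>)
qed

lemma Sat_power_pi_closed:
  assumes fin: "finite C" and h: "range h \<subseteq> C" and w: "om_word (Sat pi h) r F"
  shows "power_pi pi r F \<in> Sat pi h"
proof -
  interpret power: ordinal_monoid_on "Pow C" "power_pi pi"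
    by (rule ordinal_monoid_on.intro[OF ordinal_monoid_power_pi])
  have Sat: "Sat pi h \<subseteq> Pow C"
    by (rule Sat_subset_Pow[OF fin h])
  show ?thesis
  proof (rule power.pi_in_closed_subset[OF _ Sat _ _ _ w])
    show "finite (Pow C)" using fin by simp
    show "om_one (power_pi pi) \<in> Sat pi h"
      unfolding om_one_power_pi by (rule Sat.unit)
    show "om_mult (power_pi pi) X Y \<in> Sat pi h" if "X \<in> Sat pi h" "Y \<in> Sat pi h" for X Y
      using that Sat om_mult_power_pi Sat.mul by (metis PowD subsetD)
    show "om_omega (power_pi pi) X \<in> Sat pi h" if "X \<in> Sat pi h" for X
      using that Sat om_omega_power_pi[OF fin] Sat.omega by (metis PowD subsetD)
  qed
qed

end

theorem lemma5p1:
  fixes M :: "'a set" and pi :: "nat rel \<Rightarrow> (nat \<Rightarrow> 'a) \<Rightarrow> 'a" and h :: "'b \<Rightarrow> 'a"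
  assumes "finite M" and "ordinal_monoid M pi" and "range h \<subseteq> M"
  shows "ordinal_monoid_merge (Pow M) {om_one pi} (\<subseteq>) (pmul pi) (pomega pi) (psharp pi)
       \<and> ordinal_monoid_merge (Sat pi h) {om_one pi} (\<subseteq>) (pmul pi) (pomega pi) (psharp pi)"
proof
  interpret ordinal_monoid_on M pi
    by (rule ordinal_monoid_on.intro[OF assms(2)])
  show "ordinal_monoid_merge (Pow M) {om_one pi} (\<subseteq>) (pmul pi) (pomega pi) (psharp pi)"
    using assms(1) ordinal_monoid_power_pi psharp_closed
    by (intro ordinal_monoid_merge_power_pi) (auto simp: ordinal_monoid_def)
  show "ordinal_monoid_merge (Sat pi h) {om_one pi} (\<subseteq>) (pmul pi) (pomega pi) (psharp pi)"
    using assms(1,3) Sat_subset_Pow Sat_power_pi_closed Sat.sharp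
    by (intro ordinal_monoid_merge_power_pi) auto
qed

end
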